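(* Let $W$ be a finite Coxeter group of rank $r$ with realization $\mathbb V$, $\mathbb V^W=0$, and let $\mathsf{tr}=\sum_{\phi\in\hat W}\mathsf{tr}_\phi\,\phi_{\boldsymbol q}$ be Gomi's trace. Then for all $\beta\in\mathit{Br}_W$, $$\mathsf{tr}(\beta)=(-\boldsymbol q^{-\frac12})^{|\beta|}\left(\frac{1-\boldsymbol q}{1-a^2}\right)^r\sum_i(-a^2)^i\,(\mathrm{Alt}^i(\mathbb V),\mathrm{Tr}^0\{\beta\})_W.$$
   Context: $(W,S)$ a finite Coxeter system, $\mathit{Br}_W$ its Artin braid group, writhe $|\sigma_s|=1$; $H_W=\mathbb Z[\boldsymbol q^{\pm1/2}][\mathit{Br}_W^+]/((\sigma_s-\boldsymbol q^{1/2})(\sigma_s+\boldsymbol q^{-1/2}))$; $\phi_{\boldsymbol q}$ the character of $H_W$ corresponding to $\phi\in\hat W$ by Tits deformation; $\{-,-\}$ Lusztig's exotic Fourier pairing on $\hat W$; $(-,-)_W$ the standard multiplicity pairing on $R(W)$, extended linearly; $\varepsilon$ the sign character; $[\mathrm{Sym}\mathbb V]_{\boldsymbol q}=\sum_i\boldsymbol q^i\mathrm{Sym}^i\mathbb V$; $\mathrm{Tr}\{\beta\}=\sum_{\phi,\psi}\{\phi,\psi\}\phi_{\boldsymbol q}(\beta)\psi$ and $\mathrm{Tr}^0\{\beta\}=(-\boldsymbol q^{1/2})^{|\beta|}\mathrm{Tr}\{\beta\}\varepsilon[\mathrm{Sym}\mathbb V]_{\boldsymbol q}$. Gomi's weights: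 $\boldsymbol m_\psi(\boldsymbol q,x)=\sum_{i,j}(-x)^i\boldsymbol q^j(\psi,\mathrm{Alt}^i(\mathbb V)\otimes\mathrm{Sym}^j(\mathbb V))_W$ and $\mathsf{tr}_\phi=\left(\frac{1-\boldsymbol q}{1-a^{-2}}\right)^r\sum_{\psi}\{\phi,\psi\}\boldsymbol m_\psi(\boldsymbol q,a^{-2})$, with $a$ a further indeterminate. *)

theory Defs
  imports "HOL-Analysis.Analysis"
begin

type_synonym 'n mtx = "real^'n^'n"

text \<open>Orthogonal reflection of the realization V = real^'n (standard inner product).\<close>
definition reflection :: "'n::finite mtx \<Rightarrow> bool" where
  "reflection s \<longleftrightarrow> (\<exists>v::real^'n. v \<noteq> 0 \<and>
      s = mat 1 - (2 / (v \<bullet> v)) *\<^sub>R (\<chi> i j. v $ i * v $ j))"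

text \<open>The group W generated by a set S of reflections (finite case: closure under products).\<close>
inductive_set gen_group :: "'n::finite mtx set \<Rightarrow> 'n mtx set" for S where
  one: "mat 1 \<in> gen_group S"
| step: "g \<in> gen_group S \<Longrightarrow> s \<in> S \<Longrightarrow> s ** g \<in> gen_group S"

definition class_pairing :: "'n::finite mtx set \<Rightarrow> ('n mtx \<Rightarrow> real) \<Rightarrow> ('n mtx \<Rightarrow> real) \<Rightarrow> real" where
  "class_pairing W f g = (\<Sum>w\<in>W. f w * g w) / real (card W)"

text \<open>Irr is the set of irreducible characters of W: an orthonormal basis of class functions.\<close>
definition irr_chars :: "'n::finite mtx set \<Rightarrow> ('n mtx \<Rightarrow> real) set \<Rightarrow> bool" where
  "irr_chars W Irr \<longleftrightarrow> finite Irr \<and>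
     (\<forall>c0\<in>Irr. \<forall>g\<in>W. \<forall>w\<in>W. c0 (g ** w ** matrix_inv g) = c0 w) \<and>
     (\<forall>c0\<in>Irr. c0 (mat 1) > 0) \<and>
     (\<forall>c0\<in>Irr. \<forall>\<psi>\<in>Irr. class_pairing W c0 \<psi> = (if c0 = \<psi> then 1 else 0)) \<and>
     (\<forall>f. (\<forall>g\<in>W. \<forall>w\<in>W. f (g ** w ** matrix_inv g) = f w) \<longrightarrow>
          (\<exists>c. \<forall>w\<in>W. f w = (\<Sum>c0\<in>Irr. c c0 * c0 w)))"

text \<open>Character of Alt^i(V): sum of the principal i x i minors.\<close>
definition alt_char :: "nat \<Rightarrow> 'n::finite mtx \<Rightarrow> real" where
  "alt_char i w = (\<Sum>K\<in>{K. card K = i}.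
      det (\<chi> a b. if a \<in> K \<and> b \<in> K then w $ a $ b else if a = b then 1 else 0))"

text \<open>Graded character of Sym(V), [Sym V]_q evaluated at a number 0 < q < 1:
  sum_j q^j tr(w | Sym^j V) = 1 / det(1 - q w).\<close>
definition sym_char_q :: "real \<Rightarrow> 'n::finite mtx \<Rightarrow> real" where
  "sym_char_q q w = 1 / det (mat 1 - q *\<^sub>R w)"

text \<open>Elements of Br_W as words in the generators sigma_s^{+-1} (True = positive).\<close>
type_synonym 'n braid_word = "('n mtx \<times> bool) list"

definition writhe :: "'n braid_word \<Rightarrow> int" where
  "writhe \<beta> = (\<Sum>x\<leftarrow>\<beta>. if snd x then 1 else -1)"

text \<open>Tr^0{beta} as a class function on W (with q specialised).\<close>
definition Tr0 :: "('n::finite mtx \<Rightarrow> real) set \<Rightarrow> (('n mtx \<Rightarrow> real) \<Rightarrow> ('n mtx \<Rightarrow> real) \<Rightarrow> real)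
     \<Rightarrow> (('n mtx \<Rightarrow> real) \<Rightarrow> 'n braid_word \<Rightarrow> real) \<Rightarrow> real \<Rightarrow> 'n braid_word \<Rightarrow> 'n mtx \<Rightarrow> real" where
  "Tr0 Irr fp hc q \<beta> w = (- sqrt q) powi writhe \<beta> *
      (\<Sum>\<phi>\<in>Irr. \<Sum>\<psi>\<in>Irr. fp \<phi> \<psi> * hc \<phi> \<beta> * \<psi> w) * det w * sym_char_q q w"

definition gomi_m :: "'n::finite mtx set \<Rightarrow> ('n mtx \<Rightarrow> real) \<Rightarrow> real \<Rightarrow> real \<Rightarrow> real" where
  "gomi_m W \<psi> q x = (\<Sum>i\<le>CARD('n). (- x) ^ i *
      class_pairing W \<psi> (\<lambda>w. alt_char i w * sym_char_q q w))"

definition gomi_tr_phi :: "'n::finite mtx set \<Rightarrow> ('n mtx \<Rightarrow> real) set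
     \<Rightarrow> (('n mtx \<Rightarrow> real) \<Rightarrow> ('n mtx \<Rightarrow> real) \<Rightarrow> real) \<Rightarrow> real \<Rightarrow> real \<Rightarrow> ('n mtx \<Rightarrow> real) \<Rightarrow> real" where
  "gomi_tr_phi W Irr fp q a \<phi> = ((1 - q) / (1 - a powi (-2))) ^ CARD('n) *
      (\<Sum>\<psi>\<in>Irr. fp \<phi> \<psi> * gomi_m W \<psi> q (a powi (-2)))"

definition gomi_trace :: "'n::finite mtx set \<Rightarrow> ('n mtx \<Rightarrow> real) set
     \<Rightarrow> (('n mtx \<Rightarrow> real) \<Rightarrow> ('n mtx \<Rightarrow> real) \<Rightarrow> real)
     \<Rightarrow> (('n mtx \<Rightarrow> real) \<Rightarrow> 'n braid_word \<Rightarrow> real) \<Rightarrow> real \<Rightarrow> real \<Rightarrow> 'n braid_word \<Rightarrow> real" where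
  "gomi_trace W Irr fp hc q a \<beta> = (\<Sum>\<phi>\<in>Irr. gomi_tr_phi W Irr fp q a \<phi> * hc \<phi> \<beta>)"

end

theory Submission
  imports Defs
begin

text \<open>
  Every element w of W is a product of reflections, hence orthogonal, and for orthogonal w the
  complementary principal minors satisfy Jacobi's identity det w_(-K) = det w * det w_K. On
  characters this is the Hodge star isomorphism Alt^(r-i) V = Alt^i V (x) sign, which gives
  (Alt^i V, Tr^0{\<beta>})_W = (-q^(1/2))^|\<beta>| (Tr{\<beta>}, Alt^(r-i) V (x) Sym V)_W.
  Gomi's trace is the generating function of the pairings (Tr{\<beta>}, Alt^j V (x) Sym V)_W in
  the variable -a^(-2), and substituting j = r - i turns ((1-q)/(1-a^(-2)))^r (-a^(-2))^j into
  ((1-q)/(1-a^2))^r (-a^2)^i.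
\<close>

definition principal_block :: "'n::finite set \<Rightarrow> real^'n^'n \<Rightarrow> real^'n^'n" where
  "principal_block K A = (\<chi> a b. if a \<in> K \<and> b \<in> K then A $ a $ b else if a = b then 1 else 0)"

lemma alt_char_eq_sum_principal_block:
  "alt_char i w = (\<Sum>K\<in>{K. card K = i}. det (principal_block K w))"
  by (simp add: alt_char_def principal_block_def)

lemma det_eq_det_principal_block:
  fixes A :: "real^'n::finite^'n"
  assumes unit_cols: "\<And>i j. j \<notin> K \<Longrightarrow> A $ i $ j = (if i = j then 1 else 0)"
  shows "det A = det (principal_block K A)"
  unfolding det_def
proof (rule sum.cong[OF refl])
  fix p assume "p \<in> {p. p permutes (UNIV :: 'n set)}"
  then have p: "p permutes UNIV" by simp
  let ?B = "principal_block K A"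
  show "of_int (sign p) * (\<Prod>i\<in>UNIV. A $ i $ p i) = of_int (sign p) * (\<Prod>i\<in>UNIV. ?B $ i $ p i)"
  proof (cases "\<forall>j. j \<notin> K \<longrightarrow> p j = j")
    case True
    have "p i \<in> K" if "i \<in> K" for i
      using True that permutes_inj[OF p] by (metis injD)
    then have "A $ i $ p i = ?B $ i $ p i" for i
      using True unit_cols by (cases "i \<in> K") (auto simp: principal_block_def)
    then show ?thesis by simp
  next
    case False
    then obtain j where j: "j \<notin> K" "p j \<noteq> j" by blast
    define i where "i = inv p j"
    have "p i = j" unfolding i_def using permutes_inverses(1)[OF p] by simp
    moreover have "i \<noteq> j" using \<open>p i = j\<close> j(2) by blast
    ultimately have "A $ i $ p i = 0" "?B $ i $ p i = 0"
      using j(1) unit_cols[of j i] by (auto simp: principal_block_def)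
    then have "(\<Prod>k\<in>UNIV. A $ k $ p k) = 0" "(\<Prod>k\<in>UNIV. ?B $ k $ p k) = 0"
      by (auto intro: prod_zero)
    then show ?thesis by (simp only:)
  qed
qed

lemma det_principal_block_orthogonal:
  fixes w :: "real^'n::finite^'n"
  assumes orth: "transpose w ** w = mat 1"
  shows "det (principal_block K w) = det w * det (principal_block (- K) w)"
proof -
  define B :: "real^'n^'n" where "B = (\<chi> i j. if j \<notin> K then w $ i $ j else if i = j then 1 else 0)"
  define M where "M = transpose w ** B"
  \<comment> \<open>M has unit columns outside K and the transposed K-block of w inside K.\<close>
  have "det B = det (principal_block (- K) B)"
    by (rule det_eq_det_principal_block) (simp add: B_def)
  also have "principal_block (- K) B = principal_block (- K) w"
    by (simp add: principal_block_def B_def vec_eq_iff)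
  finally have det_B: "det B = det (principal_block (- K) w)" .
  have M_col: "M $ i $ j = (if j \<in> K then w $ j $ i else (transpose w ** w) $ i $ j)" for i j
    by (auto simp: M_def B_def matrix_matrix_mult_def transpose_def if_distrib[of "\<lambda>x. _ * x"]
        sum.delta cong: if_cong)
  have "det M = det (principal_block K M)"
    by (rule det_eq_det_principal_block) (simp add: M_col orth mat_def)
  also have "principal_block K M = transpose (principal_block K w)"
    by (auto simp: principal_block_def M_col vec_eq_iff transpose_def)
  finally have "det M = det (principal_block K w)" by simp
  then show ?thesis
    using det_B by (simp add: M_def det_mul)
qed

lemma alt_char_complement:
  fixes w :: "real^'n::finite^'n"
  assumes "transpose w ** w = mat 1" and "i \<le> CARD('n)"
  shows "alt_char (CARD('n) - i) w = det w * alt_char i w"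
proof -
  have card_compl: "card (- K) = CARD('n) - card K" for K :: "'n set"
    by (simp add: Compl_eq_Diff_UNIV card_Diff_subset)
  have "alt_char (CARD('n) - i) w = (\<Sum>K\<in>{K. card K = i}. det (principal_block (- K) w))"
    unfolding alt_char_eq_sum_principal_block
    by (rule sum.reindex_bij_witness[where i = uminus and j = uminus])
      (use assms(2) card_compl card_mono[of UNIV] in auto)
  also have "\<dots> = det w * alt_char i w"
    using det_principal_block_orthogonal[OF assms(1), of "- _"]
    by (simp add: alt_char_eq_sum_principal_block sum_distrib_left)
  finally show ?thesis .
qed

lemma identity_minus_outer_mult_vec:
  fixes v x :: "real^'n::finite"
  shows "(mat 1 - c *\<^sub>R (\<chi> i j. v $ i * v $ j)) *v x = x - (c * (v \<bullet> x)) *\<^sub>R v"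
proof -
  have "(\<chi> i j. v $ i * v $ j) *v x = (v \<bullet> x) *\<^sub>R v"
    by (simp add: vec_eq_iff matrix_vector_mult_def inner_vec_def sum_distrib_left mult_ac)
  then show ?thesis
    by (simp add: matrix_vector_mult_diff_rdistrib scaleR_matrix_vector_assoc[symmetric])
qed

lemma orthogonal_matrix_reflection:
  fixes s :: "'n::finite mtx"
  assumes "reflection s"
  shows "orthogonal_matrix s"
proof -
  obtain v :: "real^'n" where "v \<noteq> 0"
    and s: "s = mat 1 - (2 / (v \<bullet> v)) *\<^sub>R (\<chi> i j. v $ i * v $ j)"
    using assms unfolding reflection_def by blast
  then have "v \<bullet> v \<noteq> 0" by simp
  then have "(s *v x) \<bullet> (s *v y) = x \<bullet> y" for x y
    unfolding s identity_minus_outer_mult_vec by (simp add: inner_diff inner_commute field_simps)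
  then have "orthogonal_transformation ((*v) s)"
    by (simp add: orthogonal_transformation_def matrix_vector_mul_linear)
  then show ?thesis
    by (simp add: orthogonal_transformation_matrix matrix_of_matrix_vector_mul)
qed

lemma orthogonal_matrix_gen_group:
  assumes "\<forall>s\<in>S. reflection s" and "w \<in> gen_group S"
  shows "orthogonal_matrix w"
  using assms(2)
proof induction
  case one
  show ?case by (rule orthogonal_matrix_id)
next
  case (step g s)
  then show ?case
    using assms(1) orthogonal_matrix_reflection orthogonal_matrix_mul by blast
qed

lemma class_pairing_sum_left:
  "class_pairing W (\<lambda>w. \<Sum>x\<in>X. f x w) g = (\<Sum>x\<in>X. class_pairing W (f x) g)"
  unfolding class_pairing_def
  by (simp add: sum_distrib_right sum_divide_distrib sum.swap[of _ W])

lemma class_pairing_mult_left: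
  "class_pairing W (\<lambda>w. c * f w) g = c * class_pairing W f g"
  by (simp add: class_pairing_def sum_distrib_left mult.assoc)

lemma class_pairing_cong:
  assumes "\<And>w. w \<in> W \<Longrightarrow> f w * g w = f' w * g' w"
  shows "class_pairing W f g = class_pairing W f' g'"
  unfolding class_pairing_def using assms by simp

definition Tr :: "('n::finite mtx \<Rightarrow> real) set \<Rightarrow> (('n mtx \<Rightarrow> real) \<Rightarrow> ('n mtx \<Rightarrow> real) \<Rightarrow> real)
     \<Rightarrow> (('n mtx \<Rightarrow> real) \<Rightarrow> 'n braid_word \<Rightarrow> real) \<Rightarrow> 'n braid_word \<Rightarrow> 'n mtx \<Rightarrow> real" where
  "Tr Irr fp hc \<beta> w = (\<Sum>\<phi>\<in>Irr. \<Sum>\<psi>\<in>Irr. fp \<phi> \<psi> * hc \<phi> \<beta> * \<psi> w)"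

lemma gomi_trace_eq_sum_class_pairing:
  fixes W :: "'n::finite mtx set"
  shows "gomi_trace W Irr fp hc q a \<beta> = ((1 - q) / (1 - a powi (-2))) ^ CARD('n) *
     (\<Sum>j\<le>CARD('n). (- (a powi (-2))) ^ j *
        class_pairing W (Tr Irr fp hc \<beta>) (\<lambda>w. alt_char j w * sym_char_q q w))"
  unfolding gomi_trace_def gomi_tr_phi_def gomi_m_def Tr_def class_pairing_sum_left
    class_pairing_mult_left
  by (simp add: sum_distrib_left sum_distrib_right sum.swap[of _ "{..CARD('n)}"] mult_ac)

lemma class_pairing_alt_char_Tr0:
  fixes W :: "'n::finite mtx set"
  assumes "\<And>w. w \<in> W \<Longrightarrow> orthogonal_matrix w" and "i \<le> CARD('n)"
  shows "class_pairing W (alt_char i) (Tr0 Irr fp hc q \<beta>) = (- sqrt q) powi writhe \<beta> *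
    class_pairing W (Tr Irr fp hc \<beta>) (\<lambda>w. alt_char (CARD('n) - i) w * sym_char_q q w)"
proof -
  have "class_pairing W (alt_char i) (Tr0 Irr fp hc q \<beta>) =
    class_pairing W (\<lambda>w. (- sqrt q) powi writhe \<beta> * Tr Irr fp hc \<beta> w)
      (\<lambda>w. alt_char (CARD('n) - i) w * sym_char_q q w)"
  proof (rule class_pairing_cong)
    fix w :: "'n mtx" assume "w \<in> W"
    then have "alt_char (CARD('n) - i) w = det w * alt_char i w"
      using assms alt_char_complement orthogonal_matrix by blast
    then show "alt_char i w * Tr0 Irr fp hc q \<beta> w = (- sqrt q) powi writhe \<beta> * Tr Irr fp hc \<beta> w *
      (alt_char (CARD('n) - i) w * sym_char_q q w)"
      by (simp add: Tr0_def Tr_def mult_ac)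
  qed
  then show ?thesis by (simp add: class_pairing_mult_left)
qed

lemma prefactor_sum_inverse_eq_reverse:
  fixes x q :: real and X :: "nat \<Rightarrow> real"
  assumes "x \<noteq> 0" and "x \<noteq> 1"
  shows "((1 - q) / (1 - inverse x)) ^ r * (\<Sum>j\<le>r. (- inverse x) ^ j * X j) =
    ((1 - q) / (1 - x)) ^ r * (\<Sum>i\<le>r. (- x) ^ i * X (r - i))"
proof -
  have prefactor: "(1 - q) / (1 - inverse x) = - x * ((1 - q) / (1 - x))"
    using assms by (simp add: field_simps)
  have powers: "(- x) ^ r * (- inverse x) ^ j = (- x) ^ (r - j)" if "j \<le> r" for j
  proof -
    have "(- x) ^ r = (- x) ^ (r - j) * (- x) ^ j"
      using that by (simp flip: power_add)
    moreover have "(- x) ^ j * (- inverse x) ^ j = 1"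
      using assms by (simp flip: power_mult_distrib)
    ultimately show ?thesis by (simp only: mult.assoc mult_1_right)
  qed
  have "((1 - q) / (1 - inverse x)) ^ r * (\<Sum>j\<le>r. (- inverse x) ^ j * X j) =
    ((1 - q) / (1 - x)) ^ r * (\<Sum>j\<le>r. ((- x) ^ r * (- inverse x) ^ j) * X j)"
    unfolding prefactor power_mult_distrib sum_distrib_left by (simp only: mult_ac)
  also have "\<dots> = ((1 - q) / (1 - x)) ^ r * (\<Sum>j\<le>r. (- x) ^ (r - j) * X j)"
    using powers by simp
  also have "(\<Sum>j\<le>r. (- x) ^ (r - j) * X j) = (\<Sum>i\<le>r. (- x) ^ i * X (r - i))"
    by (rule sum.reindex_bij_witness[where i = "\<lambda>i. r - i" and j = "\<lambda>i. r - i"]) auto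
  finally show ?thesis .
qed

theorem proposition7p5:
  fixes S :: "'n::finite mtx set"
    and Irr :: "('n mtx \<Rightarrow> real) set"
    and fp :: "('n mtx \<Rightarrow> real) \<Rightarrow> ('n mtx \<Rightarrow> real) \<Rightarrow> real"
    and hc :: "('n mtx \<Rightarrow> real) \<Rightarrow> 'n braid_word \<Rightarrow> real"
    and \<beta> :: "'n braid_word"
    and q a :: real
  assumes "finite S" and "\<forall>s\<in>S. reflection s"
    and "finite (gen_group S)"
    and "\<forall>v::real^'n. (\<forall>w\<in>gen_group S. w *v v = v) \<longrightarrow> v = 0"
    and "irr_chars (gen_group S) Irr"
    and "\<forall>x\<in>set \<beta>. fst x \<in> S"
    and "0 < q" and "q < 1" and "a \<noteq> 0" and "a^2 \<noteq> 1"
  shows "gomi_trace (gen_group S) Irr fp hc q a \<beta> =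
    (- 1 / sqrt q) powi writhe \<beta> * ((1 - q) / (1 - a^2)) ^ CARD('n) *
    (\<Sum>i\<le>CARD('n). (- (a^2)) ^ i *
        class_pairing (gen_group S) (alt_char i) (Tr0 Irr fp hc q \<beta>))"
proof -
  let ?W = "gen_group S" and ?r = "CARD('n)"
  let ?A = "(1 - q) / (1 - a^2)" and ?c = "(- sqrt q) powi writhe \<beta>"
  let ?P = "\<lambda>j. class_pairing ?W (Tr Irr fp hc \<beta>) (\<lambda>w. alt_char j w * sym_char_q q w)"
  have orth: "\<And>w. w \<in> ?W \<Longrightarrow> orthogonal_matrix w"
    using assms(2) by (rule orthogonal_matrix_gen_group)
  have pairings: "(\<Sum>i\<le>?r. (- (a^2)) ^ i * class_pairing ?W (alt_char i) (Tr0 Irr fp hc q \<beta>)) =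
      ?c * (\<Sum>i\<le>?r. (- (a^2)) ^ i * ?P (?r - i))"
    by (simp add: class_pairing_alt_char_Tr0[OF orth] sum_distrib_left mult_ac)
  have "a powi (-2) = inverse (a^2)"
    by (simp add: power_int_minus)
  then have "gomi_trace ?W Irr fp hc q a \<beta> =
      ((1 - q) / (1 - inverse (a^2))) ^ ?r * (\<Sum>j\<le>?r. (- inverse (a^2)) ^ j * ?P j)"
    by (simp only: gomi_trace_eq_sum_class_pairing)
  also have "\<dots> = ?A ^ ?r * (\<Sum>i\<le>?r. (- (a^2)) ^ i * ?P (?r - i))"
    by (rule prefactor_sum_inverse_eq_reverse) (use \<open>a \<noteq> 0\<close> \<open>a^2 \<noteq> 1\<close> in simp_all)
  also have "\<dots> = ((- 1 / sqrt q) powi writhe \<beta> * ?c) * ?A ^ ?r *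
      (\<Sum>i\<le>?r. (- (a^2)) ^ i * ?P (?r - i))"
    using \<open>0 < q\<close> by (simp flip: power_int_mult_distrib)
  finally show ?thesis
    unfolding pairings by (simp only: mult.assoc mult.left_commute[of ?c])
qed

end
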